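(* Let $T$ be a balanced tree. If $T$ has two leaves $l_1,l_2$ with $\mathrm{dist}(l_1,l_2)=4$, then $T$ is mixed.
   Context: A leaf is a vertex of degree 1; the height of a vertex is its minimum distance to a leaf; a tree is balanced if no two adjacent vertices have the same height. With $N(D)=\bigcup_{v\in D}\{u:uv\in E\}$, a TD-set is $D$ with $N(D)=V$, minimal if no proper subset is a TD-set. $T$ is unmixed if all minimal TD-sets have the same size, and mixed otherwise. *)

theory Defs
  imports Main
begin

definition graph :: "'a set \<Rightarrow> ('a \<Rightarrow> 'a \<Rightarrow> bool) \<Rightarrow> bool" where
  "graph V E \<longleftrightarrow> finite V \<and> V \<noteq> {} \<and> (\<forall>u v. E u v \<longrightarrow> E v u) \<and> (\<forall>v. \<not> E v v)
     \<and> (\<forall>u v. E u v \<longrightarrow> u \<in> V \<and> v \<in> V)"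

definition walk :: "'a set \<Rightarrow> ('a \<Rightarrow> 'a \<Rightarrow> bool) \<Rightarrow> 'a list \<Rightarrow> bool" where
  "walk V E xs \<longleftrightarrow> xs \<noteq> [] \<and> set xs \<subseteq> V \<and> (\<forall>i. Suc i < length xs \<longrightarrow> E (xs ! i) (xs ! Suc i))"

definition gconnected :: "'a set \<Rightarrow> ('a \<Rightarrow> 'a \<Rightarrow> bool) \<Rightarrow> bool" where
  "gconnected V E \<longleftrightarrow> (\<forall>u\<in>V. \<forall>v\<in>V. \<exists>xs. walk V E xs \<and> hd xs = u \<and> last xs = v)"

definition has_cycle :: "'a set \<Rightarrow> ('a \<Rightarrow> 'a \<Rightarrow> bool) \<Rightarrow> bool" where
  "has_cycle V E \<longleftrightarrow> (\<exists>xs. walk V E xs \<and> distinct xs \<and> length xs \<ge> 3 \<and> E (last xs) (hd xs))"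

definition tree :: "'a set \<Rightarrow> ('a \<Rightarrow> 'a \<Rightarrow> bool) \<Rightarrow> bool" where
  "tree V E \<longleftrightarrow> graph V E \<and> gconnected V E \<and> \<not> has_cycle V E"

definition gdist :: "'a set \<Rightarrow> ('a \<Rightarrow> 'a \<Rightarrow> bool) \<Rightarrow> 'a \<Rightarrow> 'a \<Rightarrow> nat" where
  "gdist V E u v = (LEAST n. \<exists>xs. walk V E xs \<and> hd xs = u \<and> last xs = v \<and> length xs = Suc n)"

definition neighbours :: "('a \<Rightarrow> 'a \<Rightarrow> bool) \<Rightarrow> 'a \<Rightarrow> 'a set" where
  "neighbours E v = {u. E v u}"

definition degree :: "('a \<Rightarrow> 'a \<Rightarrow> bool) \<Rightarrow> 'a \<Rightarrow> nat" where
  "degree E v = card (neighbours E v)"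

definition leaf :: "'a set \<Rightarrow> ('a \<Rightarrow> 'a \<Rightarrow> bool) \<Rightarrow> 'a \<Rightarrow> bool" where
  "leaf V E v \<longleftrightarrow> v \<in> V \<and> degree E v = 1"

definition height :: "'a set \<Rightarrow> ('a \<Rightarrow> 'a \<Rightarrow> bool) \<Rightarrow> 'a \<Rightarrow> nat" where
  "height V E v = (LEAST n. \<exists>l. leaf V E l \<and> gdist V E v l = n)"

definition balanced :: "'a set \<Rightarrow> ('a \<Rightarrow> 'a \<Rightarrow> bool) \<Rightarrow> bool" where
  "balanced V E \<longleftrightarrow> (\<forall>u v. E u v \<longrightarrow> height V E u \<noteq> height V E v)"

definition nbhd :: "('a \<Rightarrow> 'a \<Rightarrow> bool) \<Rightarrow> 'a set \<Rightarrow> 'a set" where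
  "nbhd E D = (\<Union>v\<in>D. neighbours E v)"

definition TD_set :: "'a set \<Rightarrow> ('a \<Rightarrow> 'a \<Rightarrow> bool) \<Rightarrow> 'a set \<Rightarrow> bool" where
  "TD_set V E D \<longleftrightarrow> D \<subseteq> V \<and> nbhd E D = V"

definition minimal_TD_set :: "'a set \<Rightarrow> ('a \<Rightarrow> 'a \<Rightarrow> bool) \<Rightarrow> 'a set \<Rightarrow> bool" where
  "minimal_TD_set V E D \<longleftrightarrow> TD_set V E D \<and> (\<forall>D'. D' \<subset> D \<longrightarrow> \<not> TD_set V E D')"

definition unmixed :: "'a set \<Rightarrow> ('a \<Rightarrow> 'a \<Rightarrow> bool) \<Rightarrow> bool" where
  "unmixed V E \<longleftrightarrow> (\<forall>D1 D2. minimal_TD_set V E D1 \<longrightarrow> minimal_TD_set V E D2 \<longrightarrow> card D1 = card D2)"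

definition mixed :: "'a set \<Rightarrow> ('a \<Rightarrow> 'a \<Rightarrow> bool) \<Rightarrow> bool" where
  "mixed V E \<longleftrightarrow> \<not> unmixed V E"

end

theory Submission
  imports Defs
begin

(* Let l1 - a - c - b - l2 be the path between the two leaves; the supports a and b have
   height 1. Every vertex v other than a, b has a neighbour adjacent to neither a nor b:
   otherwise v would be a leaf (impossible, as its support would have height 1 next to a
   vertex of height 1), or two neighbours of v would close a cycle through a - c - b.
   So there is an inclusion-minimal set D of such vertices dominating V - {a, b}.
   D + {l1, l2} is a minimal TD-set of size |D| + 2, whereas the TD-set D + {c} contains
   a minimal TD-set of size at most |D| + 1. *)

lemma walk_singleton_iff [simp]: "walk V E [x] \<longleftrightarrow> x \<in> V"
  by (auto simp: walk_def)

lemma walk_Cons_Cons_iff [simp]: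
  "walk V E (x # y # xs) \<longleftrightarrow> x \<in> V \<and> E x y \<and> walk V E (y # xs)"
  unfolding walk_def by (auto simp: less_Suc_eq_0_disj)

lemma in_nbhd_iff [simp]: "u \<in> nbhd E D \<longleftrightarrow> (\<exists>v\<in>D. E v u)"
  by (auto simp: nbhd_def neighbours_def)

lemma ex_minimal_subset:
  assumes "finite A" "P A"
  shows "\<exists>B\<subseteq>A. P B \<and> (\<forall>C\<subset>B. \<not> P C)"
proof -
  let ?S = "{B. B \<subseteq> A \<and> P B}"
  have "finite ?S"
    using finite_Collect_subsets[OF assms(1)] by (rule finite_subset[rotated]) blast
  moreover have "?S \<noteq> {}" using assms(2) by blast
  ultimately obtain B where "B \<in> ?S" and "\<forall>C\<in>?S. C \<le> B \<longrightarrow> B = C"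
    by (meson finite_has_minimal)
  then show ?thesis by (metis (mono_tags, lifting) mem_Collect_eq order.strict_iff_order order.trans)
qed

lemma graph_sym: "graph V E \<Longrightarrow> E u v \<Longrightarrow> E v u"
  by (simp add: graph_def)

lemma graph_irrefl [simp]: "graph V E \<Longrightarrow> \<not> E v v"
  by (simp add: graph_def)

lemma graph_edge_in: "graph V E \<Longrightarrow> E u v \<Longrightarrow> u \<in> V \<and> v \<in> V"
  by (simp add: graph_def)

lemma leaf_neighbour_unique:
  assumes "leaf V E l" "E l x" "E l y"
  shows "x = y"
proof -
  have "card (neighbours E l) = 1" using assms(1) by (simp add: leaf_def degree_def)
  then obtain w where "neighbours E l = {w}" by (auto simp: card_Suc_eq)
  then show ?thesis using assms(2,3) by (metis mem_Collect_eq neighbours_def singletonD)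
qed

lemma ex_second_neighbour:
  assumes "v \<in> V" "\<not> leaf V E v" "E v x"
  obtains y where "E v y" "y \<noteq> x"
proof -
  have "neighbours E v \<noteq> {x}" using assms by (auto simp: leaf_def degree_def)
  then show thesis using that assms(3) by (auto simp: neighbours_def)
qed

lemma ex_neighbour:
  assumes "gconnected V E" "u \<in> V" "v \<in> V" "u \<noteq> v"
  obtains x where "E u x"
proof -
  obtain xs where "walk V E xs" "hd xs = u" "last xs = v"
    using assms(1-3) by (auto simp: gconnected_def)
  then show thesis using that assms(4)
    by (cases xs rule: remdups_adj.cases) (auto simp: walk_def)
qed

lemma gdist_le:
  assumes "walk V E xs" "hd xs = u" "last xs = v" "length xs = Suc n"
  shows "gdist V E u v \<le> n"
  unfolding gdist_def by (rule Least_le) (use assms in blast)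

lemma ex_walk_gdist:
  assumes "gconnected V E" "u \<in> V" "v \<in> V"
  obtains xs where "walk V E xs" "hd xs = u" "last xs = v" "length xs = Suc (gdist V E u v)"
proof -
  obtain xs where "walk V E xs" "hd xs = u" "last xs = v"
    using assms by (auto simp: gconnected_def)
  moreover from this have "length xs = Suc (length xs - 1)" by (cases xs) (auto simp: walk_def)
  ultimately have "\<exists>n xs. walk V E xs \<and> hd xs = u \<and> last xs = v \<and> length xs = Suc n" by blast
  from LeastI_ex[OF this] show thesis using that unfolding gdist_def by blast
qed

lemma height_le_gdist: "leaf V E l \<Longrightarrow> height V E v \<le> gdist V E v l"
  unfolding height_def by (rule Least_le) blast

lemma height_leaf: "leaf V E l \<Longrightarrow> height V E l = 0"
  using height_le_gdist[of V E l l] gdist_le[of V E "[l]" l l 0] by (simp add: leaf_def)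

lemma height_support:
  assumes "graph V E" "balanced V E" "leaf V E l" "E x l"
  shows "height V E x = 1"
proof -
  have "gdist V E x l \<le> 1"
    by (rule gdist_le[of V E "[x, l]"]) (use graph_edge_in[OF assms(1,4)] assms(4) in auto)
  then have "height V E x \<le> 1"
    using height_le_gdist[OF assms(3)] order_trans by blast
  moreover have "height V E x \<noteq> 0"
    using assms(2,4) height_leaf[OF assms(3)] by (metis balanced_def)
  ultimately show ?thesis by simp
qed

lemma common_neighbour_unique:
  assumes "graph V E" "\<not> has_cycle V E" "u \<noteq> w"
    and "E u x" "E x w" "E u y" "E y w"
  shows "x = y"
proof (rule ccontr)
  assume "x \<noteq> y"
  have "walk V E [u, x, w, y]"
    using assms(1,4,5,7) graph_sym[OF assms(1)] graph_edge_in[OF assms(1)] by auto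
  moreover have "distinct [u, x, w, y]"
    using assms(1,3-7) \<open>x \<noteq> y\<close> by auto
  moreover have "E y u" using assms(1,6) by (rule graph_sym)
  ultimately show False using assms(2) unfolding has_cycle_def by fastforce
qed

lemma neighbour_near_path_unique:
  assumes "graph V E" "\<not> has_cycle V E" "E a c" "E c b" "\<not> E a b"
    and "v \<noteq> a" "v \<noteq> b" "\<not> E a v" "\<not> E b v"
    and "E v x" "E x a \<or> E x b" "E v y" "E y a \<or> E y b"
  shows "x = y"
proof -
  note sym = graph_sym[OF assms(1)] and in_V = graph_edge_in[OF assms(1)]
  have common: "x' = y'" if "E v x'" "E x' w" "E v y'" "E y' w" "w \<in> {a, b}" for x' y' w
    using common_neighbour_unique[OF assms(1,2)] that assms(6,7) by blast
  have cross: "x' = y'" if "E v x'" "E x' a" "E v y'" "E y' b" for x' y'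
  proof (rule ccontr)
    assume "x' \<noteq> y'"
    then have "a \<noteq> b" using common that by blast
    have "x' \<noteq> c"
      using common_neighbour_unique[OF assms(1,2) \<open>v \<noteq> b\<close>] that assms(4) \<open>x' \<noteq> y'\<close>
      by blast
    moreover have "y' \<noteq> c"
      using common_neighbour_unique[OF assms(1,2) \<open>v \<noteq> a\<close>] that sym[OF assms(3)] \<open>x' \<noteq> y'\<close>
      by blast
    ultimately have "distinct [v, x', a, c, b, y']"
      using assms(1,3-9) that \<open>x' \<noteq> y'\<close> \<open>a \<noteq> b\<close> sym by auto
    moreover have "walk V E [v, x', a, c, b, y']"
      using that assms(3,4) sym in_V by auto
    moreover have "E y' v" using that(3) by (rule sym)
    ultimately show False using assms(2) unfolding has_cycle_def by fastforce
  qed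
  from assms(11,13) show ?thesis
    using cross[of x y] cross[of y x] common[of x _ y] assms(10,12) by blast
qed

lemma gdist_eq_four_path:
  assumes "gconnected V E" "u \<in> V" "v \<in> V" "gdist V E u v = 4"
  obtains a c b where "E u a" "E a c" "E c b" "E b v" "a \<noteq> b" "\<not> E a b"
proof -
  obtain xs where xs: "walk V E xs" "hd xs = u" "last xs = v" "length xs = 5"
    using ex_walk_gdist[OF assms(1-3)] assms(4) by auto
  then obtain a c b where "xs = [u, a, c, b, v]"
    by (auto simp: numeral_eq_Suc length_Suc_conv)
  with xs have path: "E u a" "E a c" "E c b" "E b v" "u \<in> V" "a \<in> V" "b \<in> V" "v \<in> V"
    by auto
  have "a \<noteq> b" using gdist_le[of V E "[u, a, v]" u v 2] path assms(4) by auto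
  moreover have "\<not> E a b" using gdist_le[of V E "[u, a, b, v]" u v 3] path assms(4) by auto
  ultimately show thesis using that path by blast
qed

lemma dominated_by_non_neighbours_of_supports:
  assumes "tree V E" "balanced V E" "leaf V E l1" "leaf V E l2"
    and "E l1 a" "E a c" "E c b" "E b l2" "\<not> E a b"
  shows "V - {a, b} \<subseteq> nbhd E {w \<in> V. \<not> E a w \<and> \<not> E b w}"
proof
  fix v assume v: "v \<in> V - {a, b}"
  have g: "graph V E" and "gconnected V E" and "\<not> has_cycle V E"
    using assms(1) by (auto simp: tree_def)
  note sym = graph_sym[OF g]
  let ?A = "{w \<in> V. \<not> E a w \<and> \<not> E b w}"
  show "v \<in> nbhd E ?A"
  proof (rule ccontr)
    assume "v \<notin> nbhd E ?A"
    moreover have "a \<in> ?A" "b \<in> ?A"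
      using assms(9) g sym graph_edge_in[OF g assms(6)] graph_edge_in[OF g assms(7)] by auto
    ultimately have "\<not> E a v" "\<not> E b v" by auto
    have near: "E x a \<or> E x b" if "E v x" for x
      using \<open>v \<notin> nbhd E ?A\<close> that graph_edge_in[OF g that] sym by auto
    obtain x where x: "E v x"
      using ex_neighbour[OF \<open>gconnected V E\<close>, of v a] v graph_edge_in[OF g assms(6)] by auto
    have "height V E a = 1" "height V E b = 1"
      using height_support[OF g assms(2)] assms(3,4,8) sym[OF assms(5)] by auto
    then have "height V E x \<noteq> 1"
      using near[OF x] assms(2) unfolding balanced_def by metis
    then have "\<not> leaf V E v"
      using height_support[OF g assms(2) _ sym[OF x]] by auto
    with v x obtain y where y: "E v y" "y \<noteq> x"
      by (auto elim: ex_second_neighbour)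
    from v have "v \<noteq> a" "v \<noteq> b" by auto
    note neighbour_near_path_unique[OF g \<open>\<not> has_cycle V E\<close> assms(6,7,9) this
        \<open>\<not> E a v\<close> \<open>\<not> E b v\<close> x near[OF x] y(1) near[OF y(1)]]
    with y(2) show False by simp
  qed
qed

lemma minimal_TD_set_insert_leaves:
  assumes "graph V E" "leaf V E l1" "leaf V E l2" "E l1 a" "E l2 b" "a \<noteq> b"
    and "D \<subseteq> {w \<in> V. \<not> E a w \<and> \<not> E b w}" "V - {a, b} \<subseteq> nbhd E D"
    and "\<And>C. C \<subset> D \<Longrightarrow> \<not> V - {a, b} \<subseteq> nbhd E C"
  shows "minimal_TD_set V E (insert l1 (insert l2 D))"
proof -
  let ?D = "insert l1 (insert l2 D)"
  note sym = graph_sym[OF assms(1)] and in_V = graph_edge_in[OF assms(1)]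
  have l1: "w = a" if "E l1 w" for w using leaf_neighbour_unique[OF assms(2)] that assms(4) by blast
  have l2: "w = b" if "E l2 w" for w using leaf_neighbour_unique[OF assms(3)] that assms(5) by blast
  have D_away: "\<not> E w a" "\<not> E w b" if "w \<in> D" for w
    using that assms(7) sym by auto
  have "nbhd E ?D = V"
    using assms(4,5,8) in_V by fastforce
  then have "TD_set V E ?D"
    using assms(2,3,7) by (auto simp: TD_set_def leaf_def)
  moreover have "\<not> TD_set V E S" if "S \<subset> ?D" for S
  proof
    assume "TD_set V E S"
    then have cover: "nbhd E S = V" by (simp add: TD_set_def)
    have "a \<in> nbhd E S" "b \<in> nbhd E S"
      using in_V[OF assms(4)] in_V[OF assms(5)] cover by auto
    then obtain w1 w2 where "w1 \<in> S" "E w1 a" "w2 \<in> S" "E w2 b" by auto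
    then have "w1 = l1" "w2 = l2"
      using \<open>S \<subset> ?D\<close> D_away l1 l2 assms(6) by blast+
    then have "l1 \<in> S" "l2 \<in> S" using \<open>w1 \<in> S\<close> \<open>w2 \<in> S\<close> by simp_all
    moreover have "V - {a, b} \<subseteq> nbhd E (S \<inter> D)"
    proof
      fix z assume "z \<in> V - {a, b}"
      then obtain w where "w \<in> S" "E w z" using cover by auto
      then show "z \<in> nbhd E (S \<inter> D)"
        using \<open>S \<subset> ?D\<close> l1 l2 \<open>z \<in> V - {a, b}\<close> by auto
    qed
    then have "S \<inter> D = D" using assms(9) by blast
    ultimately show False using \<open>S \<subset> ?D\<close> by blast
  qed
  ultimately show ?thesis by (simp add: minimal_TD_set_def)
qed

lemma mixed_if_supports_share_neighbour:
  assumes "graph V E" "leaf V E l1" "leaf V E l2"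
    and "E l1 a" "E a c" "E c b" "E b l2" "a \<noteq> b"
    and "V - {a, b} \<subseteq> nbhd E {w \<in> V. \<not> E a w \<and> \<not> E b w}"
  shows "mixed V E"
proof -
  let ?A = "{w \<in> V. \<not> E a w \<and> \<not> E b w}"
  note sym = graph_sym[OF assms(1)] and in_V = graph_edge_in[OF assms(1)]
  have "finite ?A" using assms(1) by (simp add: graph_def)
  from ex_minimal_subset[where P = "\<lambda>B. V - {a, b} \<subseteq> nbhd E B", OF this assms(9)]
  obtain D where D: "D \<subseteq> ?A" "V - {a, b} \<subseteq> nbhd E D"
    and D_min: "\<And>C. C \<subset> D \<Longrightarrow> \<not> V - {a, b} \<subseteq> nbhd E C"
    by blast
  have "finite D" using \<open>finite ?A\<close> D(1) by (rule finite_subset[rotated])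
  have "nbhd E (insert c D) = V"
  proof
    show "nbhd E (insert c D) \<subseteq> V" using in_V by auto
    show "V \<subseteq> nbhd E (insert c D)" using D(2) sym[OF assms(5)] assms(6) by auto
  qed
  then have "TD_set V E (insert c D)"
    unfolding TD_set_def using D(1) in_V[OF assms(6)] by blast
  from ex_minimal_subset[where P = "TD_set V E", OF _ this] \<open>finite D\<close>
  obtain D1 where D1: "D1 \<subseteq> insert c D" "minimal_TD_set V E D1"
    unfolding minimal_TD_set_def by blast
  let ?D2 = "insert l1 (insert l2 D)"
  have D2: "minimal_TD_set V E ?D2"
    using minimal_TD_set_insert_leaves[OF assms(1-4) sym[OF assms(7)] assms(8) D D_min] .
  have "card D1 \<le> card D + 1"
    using card_mono[OF _ D1(1)] \<open>finite D\<close> by (simp add: card_insert_if split: if_splits)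
  moreover have "card ?D2 = card D + 2"
  proof -
    have "l1 \<notin> D" "l2 \<notin> D" using D(1) sym assms(4,7) by auto
    moreover have "l1 \<noteq> l2" using leaf_neighbour_unique[OF assms(2)] assms(4,8) sym[OF assms(7)] by blast
    ultimately show ?thesis using \<open>finite D\<close> by simp
  qed
  ultimately have "card D1 \<noteq> card ?D2" by linarith
  with D1(2) D2 show ?thesis unfolding mixed_def unmixed_def by blast
qed

theorem theorem3p29:
  fixes V :: "'a set" and E :: "'a \<Rightarrow> 'a \<Rightarrow> bool" and l1 l2 :: 'a
  assumes "tree V E" and "balanced V E"
    and "leaf V E l1" and "leaf V E l2" and "gdist V E l1 l2 = 4"
  shows "mixed V E"
proof -
  have g: "graph V E" and "gconnected V E" using assms(1) by (auto simp: tree_def)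
  moreover have "l1 \<in> V" "l2 \<in> V" using assms(3,4) by (auto simp: leaf_def)
  ultimately obtain a c b where path: "E l1 a" "E a c" "E c b" "E b l2" "a \<noteq> b" "\<not> E a b"
    using gdist_eq_four_path assms(5) by metis
  have "V - {a, b} \<subseteq> nbhd E {w \<in> V. \<not> E a w \<and> \<not> E b w}"
    using dominated_by_non_neighbours_of_supports[OF assms(1-4) path(1-4,6)] .
  then show ?thesis
    by (rule mixed_if_supports_share_neighbour[OF g assms(3,4) path(1-5)])
qed

end
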